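(* On the vector space $\mathbb{R}^{(\mathbb{N})}$, let $\boldsymbol{\mu}$ be the finest vector topology and $\boldsymbol{\nu}$ the finest locally convex vector topology in which $e_n\to\mathbf{0}$. Then: (1) the family $\mathcal{N}_{\mathbf{s}}$ of all sets $U(\mathrm{S})=\bigcup_{k\in\omega}\big(S(\mathbf{a}_0)+\cdots+S(\mathbf{a}_k)\big)$, where $\mathrm{S}=\{S(\mathbf{a}_k)\}_{k\in\omega}$ ranges over all sequences with $\mathbf{a}_k\in\mathcal{A}$, is a base at $\mathbf{0}$ for $\boldsymbol{\mu}$; (2) the family $\{\mathrm{conv}(V): V\in\mathcal{N}_{\mathbf{s}}\}$ is a base at $\mathbf{0}$ for $\boldsymbol{\nu}$; (3) for every $\boldsymbol{\nu}$-neighborhood $U$ of $\mathbf{0}$, every $t\in\mathbb{N}$ and every $a>0$ there is $q\in\mathbb{N}$ such that every vector $v=\lambda_1 a e_{m_1}+\cdots+\lambda_t a e_{m_t}$ with $q<m_1<\cdots<m_t$ and $\lambda_1,\dots,\lambda_t\in[-1,1]$ belongs to $U$.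
   Context: $\mathbb{N}=\{1,2,\dots\}$, $\omega=\{0\}\cup\mathbb{N}$. $\mathbb{R}^{(\mathbb{N})}$ is the space of finitely supported real sequences, $\mathbf{0}$ its zero vector, and $e_n$ the sequence with $1$ in position $n$ and $0$ elsewhere. (With $\mathbf{s}=\{1/n\}_{n\in\mathbb{N}}\cup\{0\}$ and base point $0$, $(\mathbb{R}^{(\mathbb{N})},\boldsymbol{\nu})$ is the Graev free locally convex space $L_G(\mathbf{s})$, the point $1/n$ corresponding to $e_n$.) $\mathcal{A}$ is the family of all sequences $\mathbf{a}=(a_n)_{n\in\mathbb{N}}$ of positive reals with $\lim_n a_n=\infty$. For $\mathbf{a}\in\mathcal{A}$, $S(\mathbf{a})=\bigcup_{n\in\mathbb{N}}\{t e_n : |t|<a_n\}$. $\mathrm{conv}(A)$ denotes the convex hull of $A$. *)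

theory Defs
  imports "HOL-Analysis.Analysis" "HOL-Library.Function_Algebras"
begin

instantiation "fun" :: (type, real_vector) real_vector
begin
definition scaleR_fun :: "real \<Rightarrow> ('a \<Rightarrow> 'b) \<Rightarrow> 'a \<Rightarrow> 'b"
  where "scaleR_fun c f = (\<lambda>x. c *\<^sub>R f x)"
instance by standard (auto simp: scaleR_fun_def fun_eq_iff scaleR_add_right scaleR_add_left)
end

text \<open>The space R^(N) of finitely supported real sequences indexed by N = {1,2,...}:
  sequences x :: nat \<Rightarrow> real with x 0 = 0 (position 0 is unused) and finite support.\<close>

definition Rfin :: "(nat \<Rightarrow> real) set" where
  "Rfin = {x. x 0 = 0 \<and> finite {n. x n \<noteq> 0}}"

text \<open>Unit vector e_n (meaningful for n \<ge> 1).\<close>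
definition e :: "nat \<Rightarrow> nat \<Rightarrow> real" where
  "e n = (\<lambda>k. if k = n then 1 else 0)"

definition vector_topology :: "(nat \<Rightarrow> real) topology \<Rightarrow> bool" where
  "vector_topology T \<longleftrightarrow>
     topspace T = Rfin \<and>
     continuous_map (prod_topology T T) T (\<lambda>(x, y). x + y) \<and>
     continuous_map (prod_topology euclideanreal T) T (\<lambda>(c, x). c *\<^sub>R x)"

definition locally_convex_vector_topology :: "(nat \<Rightarrow> real) topology \<Rightarrow> bool" where
  "locally_convex_vector_topology T \<longleftrightarrow>
     vector_topology T \<and>
     (\<forall>U. openin T U \<and> 0 \<in> U \<longrightarrow> (\<exists>V. openin T V \<and> convex V \<and> 0 \<in> V \<and> V \<subseteq> U))"

definition e_null :: "(nat \<Rightarrow> real) topology \<Rightarrow> bool" where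
  "e_null T \<longleftrightarrow> limitin T e 0 sequentially"

definition finest :: "((nat \<Rightarrow> real) topology \<Rightarrow> bool) \<Rightarrow> (nat \<Rightarrow> real) topology \<Rightarrow> bool" where
  "finest P T \<longleftrightarrow> P T \<and> (\<forall>T'. P T' \<longrightarrow> (\<forall>U. openin T' U \<longrightarrow> openin T U))"

definition nbhd :: "'a topology \<Rightarrow> 'a \<Rightarrow> 'a set \<Rightarrow> bool" where
  "nbhd T x U \<longleftrightarrow> (\<exists>W. openin T W \<and> x \<in> W \<and> W \<subseteq> U)"

definition nbhd_base :: "'a topology \<Rightarrow> 'a \<Rightarrow> 'a set set \<Rightarrow> bool" where
  "nbhd_base T x B \<longleftrightarrow>
     (\<forall>V\<in>B. nbhd T x V) \<and> (\<forall>U. nbhd T x U \<longrightarrow> (\<exists>V\<in>B. V \<subseteq> U))"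

text \<open>The family \<A> of sequences of positive reals tending to infinity (indexed by N = {1,2,...};
  the value at 0 is irrelevant).\<close>
definition seqA :: "(nat \<Rightarrow> real) set" where
  "seqA = {a. (\<forall>n\<ge>1. 0 < a n) \<and> filterlim a at_top sequentially}"

definition S :: "(nat \<Rightarrow> real) \<Rightarrow> (nat \<Rightarrow> real) set" where
  "S a = {t *\<^sub>R e n | t n. n \<ge> 1 \<and> \<bar>t\<bar> < a n}"

definition Useq :: "(nat \<Rightarrow> nat \<Rightarrow> real) \<Rightarrow> (nat \<Rightarrow> real) set" where
  "Useq as = (\<Union>k. {(\<Sum>i\<le>k. x i) | x. \<forall>i\<le>k. x i \<in> S (as i)})"

definition N_s :: "(nat \<Rightarrow> real) set set" where
  "N_s = {Useq as | as. \<forall>k. as k \<in> seqA}"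

end

theory Submission
  imports Defs
begin

text \<open>
  A family \<open>B\<close> of subsets of \<open>Rfin\<close> containing \<open>0\<close> that is directed downwards, admits
  halves (\<open>V' + V' \<subseteq> V\<close>) and bounded rescalings, and whose members all contain some \<open>S a\<close>,
  is a base at \<open>0\<close> of a vector topology in which \<open>e n \<rightarrow> 0\<close>; this topology is locally convex if
  the members of \<open>B\<close> are convex. Both \<open>N_s\<close> and the convex hulls of its members are such
  families, so their members are neighbourhoods of \<open>0\<close> for \<open>\<mu>\<close> and \<open>\<nu>\<close> respectively.

  Conversely, let \<open>W\<close> be a neighbourhood of \<open>0\<close> in a vector topology with \<open>e n \<rightarrow> 0\<close>. Continuity
  of scalar multiplication at \<open>(0, 0)\<close> together with \<open>e n \<rightarrow> 0\<close> shows that for every \<open>C\<close> the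
  segment \<open>{t *\<^sub>R e n | \<bar>t\<bar> < C}\<close> lies in \<open>W\<close> for all large \<open>n\<close>; a diagonal choice of radii
  then gives \<open>S a \<subseteq> W\<close>. Doing this along a chain \<open>W = Q 0 \<supseteq> Q 1 \<supseteq> \<dots>\<close> with
  \<open>Q (k+1) + Q (k+1) \<subseteq> Q k\<close> gives \<open>Useq as \<subseteq> W\<close>. Part (3) holds because a sum of \<open>t\<close>
  vectors \<open>(\<lambda>\<^sub>i a) *\<^sub>R e m\<^sub>i\<close> is the average of the vectors \<open>(t \<lambda>\<^sub>i a) *\<^sub>R e m\<^sub>i\<close>, and these lie
  in \<open>S (as 0)\<close> as soon as all \<open>m\<^sub>i\<close> are large.
\<close>

lemma sum_fun_apply: "(\<Sum>i\<in>A. f i) x = (\<Sum>i\<in>A. f i x)"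
  for f :: "'i \<Rightarrow> 'a \<Rightarrow> 'b::comm_monoid_add"
  by (induction A rule: infinite_finite_induct) auto

lemma scaleR_fun_apply [simp]: "(c *\<^sub>R f) x = c *\<^sub>R f x"
  by (simp add: scaleR_fun_def)

lemma subspace_Rfin: "subspace Rfin"
proof -
  have "{n. (x + y) n \<noteq> 0} \<subseteq> {n. x n \<noteq> 0} \<union> {n. y n \<noteq> 0}"
    "{n. (c *\<^sub>R x) n \<noteq> 0} \<subseteq> {n. x n \<noteq> 0}" for x y :: "nat \<Rightarrow> real" and c
    by auto
  then show ?thesis
    unfolding subspace_def Rfin_def by (auto intro: finite_subset)
qed

lemma e_in_Rfin: "n \<ge> 1 \<Longrightarrow> e n \<in> Rfin"
  by (simp add: Rfin_def e_def)

lemma Rfin_subset_span_e: "Rfin \<subseteq> span (e ` {1..})"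
proof
  fix x assume x: "x \<in> Rfin"
  define F where "F = {n. x n \<noteq> 0}"
  have "finite F" "0 \<notin> F" using x by (auto simp: Rfin_def F_def)
  have "x = (\<Sum>n\<in>F. x n *\<^sub>R e n)"
  proof
    fix k
    show "x k = (\<Sum>n\<in>F. x n *\<^sub>R e n) k"
      using \<open>finite F\<close> by (simp add: sum_fun_apply e_def if_distrib sum.delta F_def cong: if_cong)
  qed
  also have "\<dots> \<in> span (e ` {1..})"
    using \<open>0 \<notin> F\<close> by (intro span_sum span_scale span_base imageI) (auto simp: Suc_le_eq intro!: gr0I)
  finally show "x \<in> span (e ` {1..})" .
qed

lemma sum_mem_convex:
  assumes "convex A" "finite I" "I \<noteq> {}" "\<And>i. i \<in> I \<Longrightarrow> real (card I) *\<^sub>R y i \<in> A"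
  shows "(\<Sum>i\<in>I. y i) \<in> A"
proof -
  have "(\<Sum>i\<in>I. inverse (card I) *\<^sub>R (real (card I) *\<^sub>R y i)) \<in> A"
    using assms by (intro convex_sum) auto
  then show ?thesis
    using assms(2,3) by simp
qed

lemma sum_mem_of_halving_chain:
  fixes Q :: "nat \<Rightarrow> 'a::comm_monoid_add set" and x :: "nat \<Rightarrow> 'a"
  assumes halving: "\<And>n u v. u \<in> Q (Suc n) \<Longrightarrow> v \<in> Q (Suc n) \<Longrightarrow> u + v \<in> Q n"
    and zero: "\<And>n. 0 \<in> Q n"
    and x: "\<And>i. i \<le> k \<Longrightarrow> x i \<in> Q (Suc (j + i))"
  shows "sum x {..k} \<in> Q j"
  using x
proof (induction k arbitrary: j x)
  case 0
  then show ?case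
    using halving[where u = "x 0" and v = 0] zero by simp
next
  case (Suc k)
  have "x 0 \<in> Q (Suc j)"
    using Suc.prems[of 0] by simp
  moreover have "(\<Sum>i\<le>k. x (Suc i)) \<in> Q (Suc j)"
    using Suc.prems[of "Suc _"] by (intro Suc.IH) simp
  ultimately show ?case
    unfolding sum.atMost_Suc_shift by (rule halving)
qed

lemma seqA_dominated:
  fixes P :: "nat \<Rightarrow> real \<Rightarrow> bool"
  assumes pos: "\<And>n. n \<ge> 1 \<Longrightarrow> \<exists>r>0. P n r"
    and large: "\<And>C. eventually (\<lambda>n. P n C) sequentially"
  shows "\<exists>a\<in>seqA. \<forall>n\<ge>1. P n (a n)"
proof -
  obtain \<epsilon> where \<epsilon>: "\<And>n. n \<ge> 1 \<Longrightarrow> \<epsilon> n > 0 \<and> P n (\<epsilon> n)"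
    using pos by metis
  \<comment> \<open>The cap \<open>C \<le> n\<close> keeps the maximum finite without preventing \<open>g n \<rightarrow> \<infinity>\<close>.\<close>
  define g where "g n = Max ({C. C \<le> n \<and> P n (real C)} \<union> {0})" for n
  have g_max: "C \<le> g n" if "C \<le> n" "P n (real C)" for C n
    unfolding g_def using that by (intro Max_ge) auto
  have g_cases: "P n (real (g n)) \<or> g n = 0" for n
    using Max_in[of "{C. C \<le> n \<and> P n (real C)} \<union> {0}"] by (auto simp: g_def)
  define a where "a n = max (\<epsilon> n) (real (g n))" for n
  have "filterlim a at_top sequentially"
    unfolding filterlim_at_top
  proof
    fix Z :: real
    show "eventually (\<lambda>n. Z \<le> a n) sequentially"
      using large[of "real (nat \<lceil>Z\<rceil>)"] eventually_ge_at_top[of "nat \<lceil>Z\<rceil>"]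
    proof eventually_elim
      case (elim n)
      then have "nat \<lceil>Z\<rceil> \<le> g n"
        by (intro g_max) auto
      then show ?case
        unfolding a_def by linarith
    qed
  qed
  moreover have "\<forall>n\<ge>1. P n (a n)"
  proof (intro allI impI)
    fix n :: nat assume "n \<ge> 1"
    then show "P n (a n)"
      using \<epsilon>[of n] g_cases[of n] by (cases "\<epsilon> n \<le> real (g n)") (auto simp: a_def max_def)
  qed
  ultimately show ?thesis
    using \<epsilon> unfolding seqA_def by (intro bexI[of _ a]) (auto simp: a_def less_max_iff_disj)
qed

section \<open>The sets \<open>S a\<close> and \<open>Useq as\<close>\<close>

lemma seqA_min: "a \<in> seqA \<Longrightarrow> b \<in> seqA \<Longrightarrow> (\<lambda>n. min (a n) (b n)) \<in> seqA"
  unfolding seqA_def filterlim_at_top by (auto intro: eventually_conj)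

lemma seqA_divide:
  assumes "a \<in> seqA" "C > 0"
  shows "(\<lambda>n. a n / C) \<in> seqA"
proof -
  have "filterlim (\<lambda>n. a n * inverse C) at_top sequentially"
    using assms by (intro filterlim_at_top_mult_tendsto_pos[OF tendsto_const]) (auto simp: seqA_def)
  then show ?thesis
    using assms by (simp add: seqA_def divide_inverse)
qed

lemma S_mono:
  assumes "\<And>n. n \<ge> 1 \<Longrightarrow> a n \<le> b n"
  shows "S a \<subseteq> S b"
proof
  fix v assume "v \<in> S a"
  then obtain t n where "v = t *\<^sub>R e n" "n \<ge> 1" "\<bar>t\<bar> < a n"
    unfolding S_def by blast
  then show "v \<in> S b"
    unfolding S_def using assms[of n] by fastforce
qed

lemma zero_in_S: "a \<in> seqA \<Longrightarrow> 0 \<in> S a"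
  unfolding S_def seqA_def by (rule CollectI, rule exI[of _ 0], rule exI[of _ 1]) simp

lemma S_subset_Rfin: "S a \<subseteq> Rfin"
  unfolding S_def using e_in_Rfin subspace_scale[OF subspace_Rfin] by blast

lemma UseqI: "(\<And>i. i \<le> k \<Longrightarrow> x i \<in> S (as i)) \<Longrightarrow> (\<Sum>i\<le>k. x i) \<in> Useq as"
  unfolding Useq_def by blast

lemma UseqE:
  assumes as: "\<And>k. as k \<in> seqA" and v: "v \<in> Useq as"
  obtains x k where "\<And>i. x i \<in> S (as i)" "\<And>m. m \<ge> k \<Longrightarrow> (\<Sum>i\<le>m. x i) = v"
proof -
  obtain k x where x: "\<And>i. i \<le> k \<Longrightarrow> x i \<in> S (as i)" and "v = (\<Sum>i\<le>k. x i)"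
    using v unfolding Useq_def by blast
  define x' where "x' i = (if i \<le> k then x i else 0)" for i
  show thesis
  proof (rule that[of x' k])
    show "x' i \<in> S (as i)" for i
      using x zero_in_S[OF as] by (simp add: x'_def)
    show "(\<Sum>i\<le>m. x' i) = v" if "m \<ge> k" for m
      using that \<open>v = (\<Sum>i\<le>k. x i)\<close>
      by (simp add: x'_def sum.If_cases Int_absorb1 atMost_subset_iff flip: atMost_def)
  qed
qed

lemma S_subset_Useq: "S (as 0) \<subseteq> Useq as"
proof
  fix v assume "v \<in> S (as 0)"
  then show "v \<in> Useq as"
    using UseqI[of 0 "\<lambda>_. v" as] by (simp add: atMost_0)
qed

lemma Useq_subset_Rfin: "Useq as \<subseteq> Rfin"
proof
  fix v assume "v \<in> Useq as"
  then obtain k x where x: "\<And>i. i \<le> k \<Longrightarrow> x i \<in> S (as i)" and v: "v = (\<Sum>i\<le>k. x i)"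
    unfolding Useq_def by blast
  show "v \<in> Rfin"
    unfolding v using x S_subset_Rfin by (intro subspace_sum[OF subspace_Rfin]) blast
qed

lemma Useq_mono:
  assumes "\<And>k n. n \<ge> 1 \<Longrightarrow> as k n \<le> bs k n"
  shows "Useq as \<subseteq> Useq bs"
proof
  fix v assume "v \<in> Useq as"
  then obtain k x where x: "\<And>i. i \<le> k \<Longrightarrow> x i \<in> S (as i)" and v: "v = (\<Sum>i\<le>k. x i)"
    unfolding Useq_def by blast
  have "S (as i) \<subseteq> S (bs i)" for i
    using assms by (rule S_mono)
  then show "v \<in> Useq bs"
    unfolding v using x by (intro UseqI) blast
qed

lemma Useq_Int_refinement:
  assumes "\<And>k. as k \<in> seqA" "\<And>k. bs k \<in> seqA"
  shows "\<exists>cs. (\<forall>k. cs k \<in> seqA) \<and> Useq cs \<subseteq> Useq as \<inter> Useq bs"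
proof -
  have "Useq (\<lambda>k n. min (as k n) (bs k n)) \<subseteq> Useq as" "Useq (\<lambda>k n. min (as k n) (bs k n)) \<subseteq> Useq bs"
    by (rule Useq_mono, simp)+
  moreover have "\<forall>k. (\<lambda>n. min (as k n) (bs k n)) \<in> seqA"
    using assms seqA_min by blast
  ultimately show ?thesis
    by (intro exI[of _ "\<lambda>k n. min (as k n) (bs k n)"]) blast
qed

lemma Useq_scale_refinement:
  assumes as: "\<And>k. as k \<in> seqA" and C: "C > 0"
  shows "\<exists>bs. (\<forall>k. bs k \<in> seqA) \<and> (\<forall>c u. \<bar>c\<bar> \<le> C \<longrightarrow> u \<in> Useq bs \<longrightarrow> c *\<^sub>R u \<in> Useq as)"
proof (intro exI conjI allI impI)
  show "(\<lambda>n. as k n / C) \<in> seqA" for k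
    using seqA_divide[OF as C] .
  fix c u assume c: "\<bar>c\<bar> \<le> C" and "u \<in> Useq (\<lambda>k n. as k n / C)"
  then obtain k x where x: "\<And>i. i \<le> k \<Longrightarrow> x i \<in> S (\<lambda>n. as i n / C)" and u: "u = (\<Sum>i\<le>k. x i)"
    unfolding Useq_def by blast
  have "c *\<^sub>R x i \<in> S (as i)" if i: "i \<le> k" for i
  proof -
    obtain t n where "x i = t *\<^sub>R e n" "n \<ge> 1" "\<bar>t\<bar> < as i n / C"
      using x[OF i] unfolding S_def by blast
    moreover have "\<bar>c * t\<bar> < as i n"
    proof -
      have "\<bar>c * t\<bar> \<le> C * \<bar>t\<bar>"
        using c by (simp add: abs_mult mult_right_mono)
      also have "\<dots> < as i n"
        using \<open>\<bar>t\<bar> < as i n / C\<close> C by (simp add: field_simps)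
      finally show ?thesis .
    qed
    ultimately show ?thesis
      unfolding S_def by force
  qed
  then show "c *\<^sub>R u \<in> Useq as"
    unfolding u scaleR_sum_right by (rule UseqI)
qed

lemma Useq_half_refinement:
  assumes as: "\<And>k. as k \<in> seqA"
  shows "\<exists>bs. (\<forall>k. bs k \<in> seqA) \<and> (\<forall>u\<in>Useq bs. \<forall>w\<in>Useq bs. u + w \<in> Useq as)"
proof (intro exI conjI ballI allI)
  define bs where "bs k n = min (as (2 * k) n) (as (Suc (2 * k)) n)" for k n
  show bs: "bs k \<in> seqA" for k
    unfolding bs_def using seqA_min as by blast
  fix u w assume "u \<in> Useq bs" "w \<in> Useq bs"
  obtain x k where x: "\<And>i. x i \<in> S (bs i)" "\<And>m. m \<ge> k \<Longrightarrow> (\<Sum>i\<le>m. x i) = u"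
    using UseqE[OF bs \<open>u \<in> Useq bs\<close>] by blast
  obtain y l where y: "\<And>i. y i \<in> S (bs i)" "\<And>m. m \<ge> l \<Longrightarrow> (\<Sum>i\<le>m. y i) = w"
    using UseqE[OF bs \<open>w \<in> Useq bs\<close>] by blast
  \<comment> \<open>Interleave the summands of \<open>u\<close> (even indices) and \<open>w\<close> (odd indices).\<close>
  define z where "z j = (if even j then x (j div 2) else y (j div 2))" for j
  have "z j \<in> S (as j)" for j
  proof -
    have "bs (j div 2) n \<le> as j n" for n
      unfolding bs_def by (cases "even j") (auto elim!: evenE oddE)
    then have "S (bs (j div 2)) \<subseteq> S (as j)"
      by (rule S_mono)
    then show ?thesis
      using x(1) y(1) unfolding z_def by auto
  qed
  then have "(\<Sum>j\<le>Suc (2 * max k l). z j) \<in> Useq as"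
    by (rule UseqI)
  also have "(\<Sum>j\<le>Suc (2 * max k l). z j) = u + w"
    unfolding sum.in_pairs_0 z_def by (simp add: sum.distrib x(2) y(2))
  finally show "u + w \<in> Useq as" .
qed

section \<open>Vector topologies on \<open>Rfin\<close>\<close>

lemma topspace_vector_topology: "vector_topology T \<Longrightarrow> topspace T = Rfin"
  by (simp add: vector_topology_def)

lemma vector_topology_half_nbhd:
  assumes T: "vector_topology T" and W: "openin T W" "0 \<in> W"
  obtains P where "openin T P" "0 \<in> P" "\<And>x y. x \<in> P \<Longrightarrow> y \<in> P \<Longrightarrow> x + y \<in> W"
proof -
  let ?A = "{p \<in> topspace (prod_topology T T). (\<lambda>(x, y). x + y) p \<in> W}"
  have op: "openin (prod_topology T T) ?A"
    using T W(1) unfolding vector_topology_def by (intro openin_continuous_map_preimage) auto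
  have zero: "(0, 0) \<in> ?A"
    using T W(2) subspace_0[OF subspace_Rfin] by (simp add: topspace_vector_topology)
  obtain U V where UV: "openin T U" "openin T V" "0 \<in> U" "0 \<in> V" "U \<times> V \<subseteq> ?A"
    using op[unfolded openin_prod_topology_alt, rule_format, OF zero] by blast
  show thesis
  proof (rule that[of "U \<inter> V"])
    show "x + y \<in> W" if "x \<in> U \<inter> V" "y \<in> U \<inter> V" for x y
    proof -
      have "(x, y) \<in> U \<times> V"
        using that by simp
      from subsetD[OF UV(5) this] show ?thesis
        by simp
    qed
  qed (use UV in auto)
qed

lemma vector_topology_small_scalars:
  assumes T: "vector_topology T" and Q: "openin T Q" "0 \<in> Q"
  obtains \<delta> Ob where "\<delta> > 0" "openin T Ob" "0 \<in> Ob"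
    "\<And>c x. \<bar>c\<bar> < \<delta> \<Longrightarrow> x \<in> Ob \<Longrightarrow> c *\<^sub>R x \<in> Q"
proof -
  let ?A = "{p \<in> topspace (prod_topology euclideanreal T). (\<lambda>(c, x). c *\<^sub>R x) p \<in> Q}"
  have op: "openin (prod_topology euclideanreal T) ?A"
    using T Q(1) unfolding vector_topology_def by (intro openin_continuous_map_preimage) auto
  have zero: "(0, 0) \<in> ?A"
    using T Q(2) subspace_0[OF subspace_Rfin] by (simp add: topspace_vector_topology)
  obtain U Ob where UO: "openin euclideanreal U" "openin T Ob" "0 \<in> U" "0 \<in> Ob"
    "U \<times> Ob \<subseteq> ?A"
    using op[unfolded openin_prod_topology_alt, rule_format, OF zero] by blast
  obtain \<delta> where "\<delta> > 0" "ball 0 \<delta> \<subseteq> U"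
    using UO(1,3) open_contains_ball by (metis open_openin)
  show thesis
  proof (rule that[of \<delta> Ob])
    show "c *\<^sub>R x \<in> Q" if "\<bar>c\<bar> < \<delta>" "x \<in> Ob" for c x
    proof -
      have "c \<in> ball 0 \<delta>"
        using that by (simp add: dist_real_def)
      then have "(c, x) \<in> U \<times> Ob"
        using that \<open>ball 0 \<delta> \<subseteq> U\<close> by blast
      from subsetD[OF UO(5) this] show ?thesis
        by simp
    qed
  qed (use UO \<open>\<delta> > 0\<close> in auto)
qed

lemma continuous_map_scaleR_left:
  assumes "vector_topology T"
  shows "continuous_map T T (\<lambda>x. r *\<^sub>R x)"
proof -
  have "continuous_map T (prod_topology euclideanreal T) (\<lambda>x. (r, x))"
    by (simp add: continuous_map_pairwise o_def)
  then show ?thesis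
    using continuous_map_compose[of T _ "\<lambda>x. (r, x)" T "\<lambda>(c, x). c *\<^sub>R x"] assms
    unfolding vector_topology_def by (simp add: o_def)
qed

lemma continuous_map_scaleR_right:
  assumes "vector_topology T" "x \<in> Rfin"
  shows "continuous_map euclideanreal T (\<lambda>c. c *\<^sub>R x)"
proof -
  have "continuous_map euclideanreal (prod_topology euclideanreal T) (\<lambda>c. (c, x))"
    using assms by (simp add: continuous_map_pairwise o_def topspace_vector_topology)
  then show ?thesis
    using continuous_map_compose[of euclideanreal _ "\<lambda>c. (c, x)" T "\<lambda>(c, x). c *\<^sub>R x"] assms(1)
    unfolding vector_topology_def by (simp add: o_def)
qed

lemma vector_topology_segment_nbhd:
  assumes T: "vector_topology T" and Q: "openin T Q" "0 \<in> Q" and n: "n \<ge> 1"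
  obtains r where "r > 0" "\<And>t. \<bar>t\<bar> < r \<Longrightarrow> t *\<^sub>R e n \<in> Q"
proof -
  have "openin euclideanreal {c \<in> topspace euclideanreal. c *\<^sub>R e n \<in> Q}"
    using continuous_map_scaleR_right[OF T e_in_Rfin[OF n]] Q(1)
    by (rule openin_continuous_map_preimage)
  then have "open {c. c *\<^sub>R e n \<in> Q}"
    by simp
  moreover have "0 \<in> {c. c *\<^sub>R e n \<in> Q}"
    using Q(2) by simp
  ultimately obtain r where "r > 0" "ball 0 r \<subseteq> {c. c *\<^sub>R e n \<in> Q}"
    using open_contains_ball by blast
  then show thesis
    using that by (auto simp: subset_iff dist_real_def)
qed

lemma vector_topology_segments_eventually_in:
  assumes T: "vector_topology T" and en: "e_null T" and Q: "openin T Q" "0 \<in> Q"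
  shows "eventually (\<lambda>n. \<forall>t. \<bar>t\<bar> < C \<longrightarrow> t *\<^sub>R e n \<in> Q) sequentially"
proof -
  obtain \<delta> Ob where \<delta>: "\<delta> > 0" "openin T Ob" "0 \<in> Ob"
    "\<And>c x. \<bar>c\<bar> < \<delta> \<Longrightarrow> x \<in> Ob \<Longrightarrow> c *\<^sub>R x \<in> Q"
    using vector_topology_small_scalars[OF T Q] by metis
  define r where "r = (\<bar>C\<bar> + 1) / \<delta>"
  have r: "r > 0"
    using \<delta>(1) by (simp add: r_def add_pos_nonneg)
  have "openin T {x \<in> topspace T. r *\<^sub>R x \<in> Ob}"
    using continuous_map_scaleR_left[OF T] \<delta>(2) by (rule openin_continuous_map_preimage)
  moreover have "0 \<in> {x \<in> topspace T. r *\<^sub>R x \<in> Ob}"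
    using \<delta>(3) subspace_0[OF subspace_Rfin] by (simp add: topspace_vector_topology[OF T])
  ultimately have "eventually (\<lambda>n. e n \<in> {x \<in> topspace T. r *\<^sub>R x \<in> Ob}) sequentially"
    using en unfolding e_null_def limitin_def by blast
  then show ?thesis
  proof eventually_elim
    case (elim n)
    show ?case
    proof (intro allI impI)
      fix t assume "\<bar>t\<bar> < C"
      then have "\<bar>t\<bar> * \<delta> < (\<bar>C\<bar> + 1) * \<delta>"
        using \<delta>(1) by (intro mult_strict_right_mono) auto
      then have "\<bar>t / r\<bar> < \<delta>"
        using \<delta>(1) by (simp add: r_def abs_divide abs_mult field_simps)
      then have "(t / r) *\<^sub>R (r *\<^sub>R e n) \<in> Q"
        using \<delta>(4) elim by blast
      then show "t *\<^sub>R e n \<in> Q"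
        using r by simp
    qed
  qed
qed

lemma vector_topology_contains_S:
  assumes T: "vector_topology T" and en: "e_null T" and Q: "openin T Q" "0 \<in> Q"
  shows "\<exists>a\<in>seqA. S a \<subseteq> Q"
proof -
  define P where "P n r \<longleftrightarrow> (\<forall>t. \<bar>t\<bar> < r \<longrightarrow> t *\<^sub>R e n \<in> Q)" for n r
  have "\<exists>a\<in>seqA. \<forall>n\<ge>1. P n (a n)"
  proof (rule seqA_dominated)
    show "\<exists>r>0. P n r" if "n \<ge> 1" for n
      using vector_topology_segment_nbhd[OF T Q that] unfolding P_def by metis
    show "eventually (\<lambda>n. P n C) sequentially" for C
      unfolding P_def by (rule vector_topology_segments_eventually_in[OF T en Q])
  qed
  then obtain a where "a \<in> seqA" "\<And>n. n \<ge> 1 \<Longrightarrow> P n (a n)"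
    by blast
  moreover have "S a \<subseteq> Q"
    using calculation(2) unfolding S_def P_def by blast
  ultimately show ?thesis
    by blast
qed

lemma vector_topology_contains_Useq:
  assumes T: "vector_topology T" and en: "e_null T" and W: "openin T W" "0 \<in> W"
  shows "\<exists>V\<in>N_s. V \<subseteq> W"
proof -
  define small where "small P \<longleftrightarrow> openin T P \<and> 0 \<in> P \<and> P \<subseteq> W" for P
  have "\<exists>Q. \<forall>k. small (Q k) \<and> (\<forall>x\<in>Q (Suc k). \<forall>y\<in>Q (Suc k). x + y \<in> Q k)"
  proof (rule dependent_nat_choice)
    show "\<exists>P. small P"
      using W unfolding small_def by blast
    fix P assume "small P"
    then have "openin T P" "0 \<in> P"
      by (simp_all add: small_def)
    then obtain P' where P': "openin T P'" "0 \<in> P'" "\<And>x y. x \<in> P' \<Longrightarrow> y \<in> P' \<Longrightarrow> x + y \<in> P"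
      using vector_topology_half_nbhd[OF T] by metis
    have "P' \<subseteq> P"
      using P'(2,3) by force
    then show "\<exists>P'. small P' \<and> (\<forall>x\<in>P'. \<forall>y\<in>P'. x + y \<in> P)"
      using P' \<open>small P\<close> unfolding small_def by (intro exI[of _ P']) auto
  qed
  then obtain Q where Q: "\<And>k. small (Q k)" "\<And>k x y. x \<in> Q (Suc k) \<Longrightarrow> y \<in> Q (Suc k) \<Longrightarrow> x + y \<in> Q k"
    by blast
  have "\<forall>k. \<exists>a\<in>seqA. S a \<subseteq> Q (Suc k)"
    using vector_topology_contains_S[OF T en] Q(1) unfolding small_def by blast
  then obtain as where as: "\<And>k. as k \<in> seqA" "\<And>k. S (as k) \<subseteq> Q (Suc k)"
    by metis
  have "Useq as \<subseteq> Q 0"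
  proof
    fix v assume "v \<in> Useq as"
    then obtain k x where x: "\<And>i. i \<le> k \<Longrightarrow> x i \<in> S (as i)" and v: "v = (\<Sum>i\<le>k. x i)"
      unfolding Useq_def by blast
    show "v \<in> Q 0"
      unfolding v
    proof (rule sum_mem_of_halving_chain)
      show "x i \<in> Q (Suc (0 + i))" if "i \<le> k" for i
        using x[OF that] as(2) by auto
    qed (use Q in \<open>auto simp: small_def\<close>)
  qed
  moreover have "Useq as \<in> N_s"
    unfolding N_s_def using as(1) by blast
  ultimately show ?thesis
    using Q(1) unfolding small_def by blast
qed

section \<open>The vector topology generated by a base at \<open>0\<close>\<close>

lemma scaleR_image_convex_hull_subset:
  "(\<And>x. x \<in> V' \<Longrightarrow> c *\<^sub>R x \<in> V) \<Longrightarrow> (*\<^sub>R) c ` (convex hull V') \<subseteq> convex hull V"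
  by (metis convex_hull_scaling hull_mono image_subsetI)

locale zero_nbhd_base =
  fixes B :: "(nat \<Rightarrow> real) set set"
  assumes nonempty: "B \<noteq> {}"
    and subset_Rfin: "V \<in> B \<Longrightarrow> V \<subseteq> Rfin"
    and zero_mem: "V \<in> B \<Longrightarrow> 0 \<in> V"
    and Int_refinement: "V1 \<in> B \<Longrightarrow> V2 \<in> B \<Longrightarrow> \<exists>V\<in>B. V \<subseteq> V1 \<inter> V2"
    and half_refinement: "V \<in> B \<Longrightarrow> \<exists>V'\<in>B. \<forall>x\<in>V'. \<forall>y\<in>V'. x + y \<in> V"
    and scale_refinement:
      "V \<in> B \<Longrightarrow> C > 0 \<Longrightarrow> \<exists>V'\<in>B. \<forall>c x. \<bar>c\<bar> \<le> C \<longrightarrow> x \<in> V' \<longrightarrow> c *\<^sub>R x \<in> V"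
    and contains_S: "V \<in> B \<Longrightarrow> \<exists>a\<in>seqA. S a \<subseteq> V"
begin

definition base_interior :: "(nat \<Rightarrow> real) set \<Rightarrow> (nat \<Rightarrow> real) set"
  where "base_interior A = {x \<in> Rfin. \<exists>V\<in>B. (+) x ` V \<subseteq> A}"

definition generated_topology :: "(nat \<Rightarrow> real) topology"
  where "generated_topology = topology (\<lambda>W. W \<subseteq> base_interior W)"

lemma base_interior_subset: "base_interior A \<subseteq> A"
  unfolding base_interior_def using zero_mem by fastforce

lemma base_interior_subset_Rfin: "base_interior A \<subseteq> Rfin"
  unfolding base_interior_def by blast

lemma translate_mem_base_interior: "x \<in> Rfin \<Longrightarrow> V \<in> B \<Longrightarrow> x \<in> base_interior ((+) x ` V)"
  unfolding base_interior_def by blast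

lemma base_interior_mono: "A \<subseteq> A' \<Longrightarrow> base_interior A \<subseteq> base_interior A'"
  unfolding base_interior_def by blast

lemma base_interior_Int: "base_interior A \<inter> base_interior A' \<subseteq> base_interior (A \<inter> A')"
proof
  fix x assume "x \<in> base_interior A \<inter> base_interior A'"
  then obtain V1 V2 where x: "x \<in> Rfin" and V1: "V1 \<in> B" "(+) x ` V1 \<subseteq> A"
    and V2: "V2 \<in> B" "(+) x ` V2 \<subseteq> A'"
    unfolding base_interior_def by auto
  obtain V where V: "V \<in> B" "V \<subseteq> V1 \<inter> V2"
    using Int_refinement[OF V1(1) V2(1)] by blast
  have "(+) x ` V \<subseteq> A \<inter> A'"
    using V(2) V1(2) V2(2) by blast
  then show "x \<in> base_interior (A \<inter> A')"
    unfolding base_interior_def using x V(1) by blast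
qed

lemma base_interior_idem: "base_interior A \<subseteq> base_interior (base_interior A)"
proof
  fix x assume "x \<in> base_interior A"
  then obtain V where x: "x \<in> Rfin" and V: "V \<in> B" "(+) x ` V \<subseteq> A"
    unfolding base_interior_def by blast
  obtain V' where V': "V' \<in> B" "\<And>u v. u \<in> V' \<Longrightarrow> v \<in> V' \<Longrightarrow> u + v \<in> V"
    using half_refinement[OF V(1)] by blast
  have "x + v \<in> base_interior A" if "v \<in> V'" for v
  proof -
    have "x + v \<in> Rfin"
      using that x V'(1) subset_Rfin subspace_add[OF subspace_Rfin] by blast
    moreover have "(+) (x + v) ` V' \<subseteq> A"
    proof
      fix y assume "y \<in> (+) (x + v) ` V'"
      then obtain u where "u \<in> V'" "y = x + (v + u)"
        by (auto simp: add.assoc)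
      then show "y \<in> A"
        using that V'(2) V(2) by blast
    qed
    ultimately show ?thesis
      using V'(1) unfolding base_interior_def by blast
  qed
  then show "x \<in> base_interior (base_interior A)"
    using x V'(1) unfolding base_interior_def by blast
qed

lemma openin_generated_topology: "openin generated_topology W \<longleftrightarrow> W \<subseteq> base_interior W"
proof -
  have top: "istopology (\<lambda>W. W \<subseteq> base_interior W)"
    unfolding istopology_def
  proof (intro conjI allI impI)
    show "S \<inter> T \<subseteq> base_interior (S \<inter> T)"
      if "S \<subseteq> base_interior S" "T \<subseteq> base_interior T" for S T
      using that base_interior_Int[of S T] by blast
    show "\<Union>K \<subseteq> base_interior (\<Union>K)" if "\<forall>W\<in>K. W \<subseteq> base_interior W" for K
    proof
      fix x assume "x \<in> \<Union>K"
      then obtain W where "W \<in> K" "x \<in> W"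
        by blast
      then have "x \<in> base_interior W"
        using that by blast
      moreover have "base_interior W \<subseteq> base_interior (\<Union>K)"
        using \<open>W \<in> K\<close> by (intro base_interior_mono) blast
      ultimately show "x \<in> base_interior (\<Union>K)"
        by blast
    qed
  qed
  show ?thesis
    unfolding generated_topology_def topology_inverse'[OF top] ..
qed

lemma openin_base_interior: "openin generated_topology (base_interior A)"
  unfolding openin_generated_topology by (rule base_interior_idem)

lemma topspace_generated_topology: "topspace generated_topology = Rfin"
proof
  show "topspace generated_topology \<subseteq> Rfin"
    unfolding topspace_def openin_generated_topology using base_interior_subset_Rfin by blast
  obtain V where V: "V \<in> B"
    using nonempty by blast
  have "x \<in> base_interior Rfin" if x: "x \<in> Rfin" for x
  proof -
    have "(+) x ` V \<subseteq> Rfin"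
      using x subset_Rfin[OF V] subspace_add[OF subspace_Rfin] by blast
    then show ?thesis
      unfolding base_interior_def using x V by blast
  qed
  then have "openin generated_topology Rfin"
    unfolding openin_generated_topology by blast
  then show "Rfin \<subseteq> topspace generated_topology"
    by (rule openin_subset)
qed

lemma nbhd_generated_topology_iff: "nbhd generated_topology x A \<longleftrightarrow> x \<in> base_interior A"
proof
  assume "nbhd generated_topology x A"
  then obtain W where "W \<subseteq> base_interior W" "x \<in> W" "W \<subseteq> A"
    unfolding nbhd_def openin_generated_topology by blast
  then show "x \<in> base_interior A"
    using base_interior_mono by blast
next
  assume "x \<in> base_interior A"
  then show "nbhd generated_topology x A"
    unfolding nbhd_def using openin_base_interior base_interior_subset by blast
qed

lemma nbhd_generated_topology: "V \<in> B \<Longrightarrow> nbhd generated_topology 0 V"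
  using translate_mem_base_interior[OF subspace_0[OF subspace_Rfin], of V]
  unfolding nbhd_generated_topology_iff by simp

lemma convex_base_interior:
  assumes "convex A"
  shows "convex (base_interior A)"
proof (rule convexI)
  fix x y :: "nat \<Rightarrow> real" and u v :: real
  assume "x \<in> base_interior A" "y \<in> base_interior A" and uv: "0 \<le> u" "0 \<le> v" "u + v = 1"
  then obtain V1 V2 where x: "x \<in> Rfin" "V1 \<in> B" "(+) x ` V1 \<subseteq> A"
    and y: "y \<in> Rfin" "V2 \<in> B" "(+) y ` V2 \<subseteq> A"
    unfolding base_interior_def by blast
  obtain V where V: "V \<in> B" "V \<subseteq> V1 \<inter> V2"
    using Int_refinement[OF x(2) y(2)] by blast
  have "u *\<^sub>R x + v *\<^sub>R y \<in> Rfin"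
    using x(1) y(1) subspace_imp_convex[OF subspace_Rfin] uv by (simp add: convexD)
  moreover have "(+) (u *\<^sub>R x + v *\<^sub>R y) ` V \<subseteq> A"
  proof
    fix z assume "z \<in> (+) (u *\<^sub>R x + v *\<^sub>R y) ` V"
    then obtain w where w: "w \<in> V" "z = u *\<^sub>R x + v *\<^sub>R y + w"
      by blast
    have "x + w \<in> A" "y + w \<in> A"
      using w(1) V(2) x(3) y(3) by blast+
    then have "u *\<^sub>R (x + w) + v *\<^sub>R (y + w) \<in> A"
      using uv assms by (simp add: convexD)
    moreover have "u *\<^sub>R (x + w) + v *\<^sub>R (y + w) = z"
      using w(2) uv(3) by (simp add: algebra_simps flip: scaleR_add_left)
    ultimately show "z \<in> A"
      by simp
  qed
  ultimately show "u *\<^sub>R x + v *\<^sub>R y \<in> base_interior A"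
    using V(1) unfolding base_interior_def by blast
qed

definition absorbed :: "(nat \<Rightarrow> real) set"
  where "absorbed = {x. \<forall>V\<in>B. \<exists>\<delta>>0. \<forall>d. \<bar>d\<bar> < \<delta> \<longrightarrow> d *\<^sub>R x \<in> V}"

lemma absorbedD: "x \<in> absorbed \<Longrightarrow> V \<in> B \<Longrightarrow> \<exists>\<delta>>0. \<forall>d. \<bar>d\<bar> < \<delta> \<longrightarrow> d *\<^sub>R x \<in> V"
  unfolding absorbed_def by blast

lemma subspace_absorbed: "subspace absorbed"
  unfolding subspace_def
proof (intro conjI ballI allI)
  show "0 \<in> absorbed"
    unfolding absorbed_def using zero_mem by (auto intro!: exI[of _ 1])
next
  fix x y assume x: "x \<in> absorbed" and y: "y \<in> absorbed"
  show "x + y \<in> absorbed"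
    unfolding absorbed_def
  proof (intro CollectI ballI)
    fix V assume "V \<in> B"
    then obtain V' where V': "V' \<in> B" "\<And>u v. u \<in> V' \<Longrightarrow> v \<in> V' \<Longrightarrow> u + v \<in> V"
      using half_refinement by blast
    obtain \<delta>1 where "\<delta>1 > 0" "\<And>d. \<bar>d\<bar> < \<delta>1 \<Longrightarrow> d *\<^sub>R x \<in> V'"
      using absorbedD[OF x V'(1)] by blast
    moreover obtain \<delta>2 where "\<delta>2 > 0" "\<And>d. \<bar>d\<bar> < \<delta>2 \<Longrightarrow> d *\<^sub>R y \<in> V'"
      using absorbedD[OF y V'(1)] by blast
    ultimately show "\<exists>\<delta>>0. \<forall>d. \<bar>d\<bar> < \<delta> \<longrightarrow> d *\<^sub>R (x + y) \<in> V"
      using V'(2) by (intro exI[of _ "min \<delta>1 \<delta>2"]) (simp add: scaleR_add_right)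
  qed
next
  fix c x assume x: "x \<in> absorbed"
  show "c *\<^sub>R x \<in> absorbed"
    unfolding absorbed_def
  proof (intro CollectI ballI)
    fix V assume "V \<in> B"
    then obtain \<delta> where \<delta>: "\<delta> > 0" "\<And>d. \<bar>d\<bar> < \<delta> \<Longrightarrow> d *\<^sub>R x \<in> V"
      using absorbedD[OF x] by blast
    have "d *\<^sub>R c *\<^sub>R x \<in> V" if "\<bar>d\<bar> < \<delta> / (\<bar>c\<bar> + 1)" for d
    proof -
      have "\<bar>d * c\<bar> \<le> \<bar>d\<bar> * (\<bar>c\<bar> + 1)"
        by (simp add: abs_mult mult_left_mono)
      also have "\<dots> < \<delta>"
        using that by (simp add: field_simps add_pos_nonneg)
      finally show ?thesis
        using \<delta>(2) by simp
    qed
    then show "\<exists>\<delta>>0. \<forall>d. \<bar>d\<bar> < \<delta> \<longrightarrow> d *\<^sub>R c *\<^sub>R x \<in> V"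
      using \<delta>(1) by (intro exI[of _ "\<delta> / (\<bar>c\<bar> + 1)"]) (simp add: add_pos_nonneg)
  qed
qed

lemma Rfin_subset_absorbed: "Rfin \<subseteq> absorbed"
proof -
  have "e n \<in> absorbed" if "n \<ge> 1" for n
    unfolding absorbed_def
  proof (intro CollectI ballI)
    fix V assume "V \<in> B"
    then obtain a where "a \<in> seqA" "S a \<subseteq> V"
      using contains_S by blast
    then have "\<forall>d. \<bar>d\<bar> < a n \<longrightarrow> d *\<^sub>R e n \<in> V"
      using that unfolding S_def by blast
    then show "\<exists>\<delta>>0. \<forall>d. \<bar>d\<bar> < \<delta> \<longrightarrow> d *\<^sub>R e n \<in> V"
      using \<open>a \<in> seqA\<close> that unfolding seqA_def by blast
  qed
  then have "span (e ` {1..}) \<subseteq> absorbed"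
    by (intro span_minimal subspace_absorbed) auto
  then show ?thesis
    using Rfin_subset_span_e by blast
qed

lemma continuous_map_add_generated_topology:
  "continuous_map (prod_topology generated_topology generated_topology) generated_topology
     (\<lambda>(x, y). x + y)"
  unfolding continuous_map
proof (intro conjI allI impI)
  show "(\<lambda>(x, y). x + y) ` topspace (prod_topology generated_topology generated_topology)
          \<subseteq> topspace generated_topology"
    using subspace_add[OF subspace_Rfin] by (auto simp: topspace_generated_topology)
  fix U assume "openin generated_topology U"
  then have U: "U \<subseteq> base_interior U"
    by (simp add: openin_generated_topology)
  let ?P = "{p \<in> topspace (prod_topology generated_topology generated_topology). (\<lambda>(x, y). x + y) p \<in> U}"
  show "openin (prod_topology generated_topology generated_topology) ?P"
  proof (subst openin_subopen, intro ballI)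
    fix p assume "p \<in> ?P"
    then obtain x y where p: "p = (x, y)" and x: "x \<in> Rfin" and y: "y \<in> Rfin" and "x + y \<in> U"
      by (auto simp: topspace_generated_topology)
    then obtain V where V: "V \<in> B" "(+) (x + y) ` V \<subseteq> U"
      using U unfolding base_interior_def by blast
    obtain V' where V': "V' \<in> B" "\<And>u v. u \<in> V' \<Longrightarrow> v \<in> V' \<Longrightarrow> u + v \<in> V"
      using half_refinement[OF V(1)] by blast
    let ?N = "base_interior ((+) x ` V') \<times> base_interior ((+) y ` V')"
    have "openin (prod_topology generated_topology generated_topology) ?N"
      by (simp add: openin_prod_Times_iff openin_base_interior)
    moreover have "p \<in> ?N"
      using p x y V'(1) by (simp add: translate_mem_base_interior)
    moreover have "?N \<subseteq> ?P"
    proof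
      fix q assume q: "q \<in> ?N"
      then obtain u v where uv: "q = (x + u, y + v)" "u \<in> V'" "v \<in> V'"
        using base_interior_subset by (cases q) blast
      have "(x + y) + (u + v) \<in> U"
        using V(2) V'(2)[OF uv(2,3)] by blast
      moreover have "q \<in> topspace (prod_topology generated_topology generated_topology)"
        using q base_interior_subset_Rfin by (auto simp: topspace_generated_topology)
      ultimately show "q \<in> ?P"
        using uv(1) by (simp add: algebra_simps)
    qed
    ultimately show "\<exists>N. openin (prod_topology generated_topology generated_topology) N \<and> p \<in> N \<and> N \<subseteq> ?P"
      by blast
  qed
qed

lemma scaleR_perturbation_mem:
  assumes x: "x \<in> Rfin" and cx: "c *\<^sub>R x \<in> base_interior U"
  obtains \<delta> V where "\<delta> > 0" "V \<in> B" "\<And>c' z. \<bar>c' - c\<bar> < \<delta> \<Longrightarrow> z \<in> V \<Longrightarrow> c' *\<^sub>R (x + z) \<in> U"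
proof -
  obtain V where V: "V \<in> B" "(+) (c *\<^sub>R x) ` V \<subseteq> U"
    using cx unfolding base_interior_def by blast
  obtain V' where V': "V' \<in> B" "\<And>u v. u \<in> V' \<Longrightarrow> v \<in> V' \<Longrightarrow> u + v \<in> V"
    using half_refinement[OF V(1)] by blast
  have "\<bar>c\<bar> + 1 > 0"
    by (simp add: add_pos_nonneg)
  then obtain V1 where V1: "V1 \<in> B" "\<forall>c' z. \<bar>c'\<bar> \<le> \<bar>c\<bar> + 1 \<longrightarrow> z \<in> V1 \<longrightarrow> c' *\<^sub>R z \<in> V'"
    using scale_refinement[OF V'(1)] by blast
  obtain \<delta> where \<delta>: "\<delta> > 0" "\<And>d. \<bar>d\<bar> < \<delta> \<Longrightarrow> d *\<^sub>R x \<in> V'"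
    using absorbedD[OF subsetD[OF Rfin_subset_absorbed x] V'(1)] by blast
  show thesis
  proof (rule that[of "min \<delta> 1" V1])
    fix c' z assume c': "\<bar>c' - c\<bar> < min \<delta> 1" and z: "z \<in> V1"
    then have "(c' - c) *\<^sub>R x + c' *\<^sub>R z \<in> V"
      using V'(2) \<delta>(2) V1(2) by auto
    then have "c *\<^sub>R x + ((c' - c) *\<^sub>R x + c' *\<^sub>R z) \<in> U"
      using V(2) by blast
    then show "c' *\<^sub>R (x + z) \<in> U"
      by (simp add: algebra_simps)
  qed (use \<delta>(1) V1(1) in auto)
qed

lemma continuous_map_scaleR_generated_topology:
  "continuous_map (prod_topology euclideanreal generated_topology) generated_topology
     (\<lambda>(c, x). c *\<^sub>R x)"
  unfolding continuous_map
proof (intro conjI allI impI)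
  show "(\<lambda>(c, x). c *\<^sub>R x) ` topspace (prod_topology euclideanreal generated_topology)
          \<subseteq> topspace generated_topology"
    using subspace_scale[OF subspace_Rfin] by (auto simp: topspace_generated_topology)
  fix U assume "openin generated_topology U"
  then have U: "U \<subseteq> base_interior U"
    by (simp add: openin_generated_topology)
  let ?P = "{p \<in> topspace (prod_topology euclideanreal generated_topology). (\<lambda>(c, x). c *\<^sub>R x) p \<in> U}"
  show "openin (prod_topology euclideanreal generated_topology) ?P"
  proof (subst openin_subopen, intro ballI)
    fix p assume "p \<in> ?P"
    then obtain c x where p: "p = (c, x)" and x: "x \<in> Rfin" and "c *\<^sub>R x \<in> U"
      by (auto simp: topspace_generated_topology)
    then obtain \<delta> V where \<delta>: "\<delta> > 0" and V: "V \<in> B"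
      and near: "\<And>c' z. \<bar>c' - c\<bar> < \<delta> \<Longrightarrow> z \<in> V \<Longrightarrow> c' *\<^sub>R (x + z) \<in> U"
      using U scaleR_perturbation_mem by blast
    let ?N = "ball c \<delta> \<times> base_interior ((+) x ` V)"
    have "openin (prod_topology euclideanreal generated_topology) ?N"
      by (simp add: openin_prod_Times_iff openin_base_interior)
    moreover have "p \<in> ?N"
      using p x V \<delta> by (simp add: translate_mem_base_interior)
    moreover have "?N \<subseteq> ?P"
    proof
      fix q assume q: "q \<in> ?N"
      then obtain c' z where cz: "q = (c', x + z)" "c' \<in> ball c \<delta>" "z \<in> V"
        using base_interior_subset by (cases q) blast
      then have "c' *\<^sub>R (x + z) \<in> U"
        using near by (simp add: dist_real_def abs_minus_commute)
      moreover have "q \<in> topspace (prod_topology euclideanreal generated_topology)"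
        using q base_interior_subset_Rfin by (auto simp: topspace_generated_topology)
      ultimately show "q \<in> ?P"
        using cz(1) by simp
    qed
    ultimately show "\<exists>N. openin (prod_topology euclideanreal generated_topology) N \<and> p \<in> N \<and> N \<subseteq> ?P"
      by blast
  qed
qed

lemma vector_topology_generated_topology: "vector_topology generated_topology"
  unfolding vector_topology_def
  using topspace_generated_topology continuous_map_add_generated_topology
    continuous_map_scaleR_generated_topology
  by blast

lemma e_null_generated_topology: "e_null generated_topology"
  unfolding e_null_def limitin_def
proof (intro conjI allI impI)
  show "0 \<in> topspace generated_topology"
    by (simp add: topspace_generated_topology subspace_0[OF subspace_Rfin])
  fix U assume "openin generated_topology U \<and> 0 \<in> U"
  then have "0 \<in> base_interior U"
    by (auto simp: openin_generated_topology)
  then obtain V where "V \<in> B" "V \<subseteq> U"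
    unfolding base_interior_def by auto
  then obtain a where "a \<in> seqA" "S a \<subseteq> U"
    using contains_S by blast
  have "eventually (\<lambda>n. 1 < a n) sequentially"
    using \<open>a \<in> seqA\<close> unfolding seqA_def by (simp add: filterlim_at_top_dense)
  then show "eventually (\<lambda>n. e n \<in> U) sequentially"
    using eventually_ge_at_top[of 1]
  proof eventually_elim
    case (elim n)
    then have "1 *\<^sub>R e n \<in> S a"
      unfolding S_def by fastforce
    then show ?case
      using \<open>S a \<subseteq> U\<close> by auto
  qed
qed

lemma locally_convex_generated_topology:
  assumes "\<And>V. V \<in> B \<Longrightarrow> convex V"
  shows "locally_convex_vector_topology generated_topology"
  unfolding locally_convex_vector_topology_def
proof (intro conjI allI impI vector_topology_generated_topology)
  fix U assume "openin generated_topology U \<and> 0 \<in> U"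
  then have "0 \<in> base_interior U"
    by (auto simp: openin_generated_topology)
  then obtain V where V: "V \<in> B" "V \<subseteq> U"
    unfolding base_interior_def by auto
  have "0 \<in> base_interior V"
    using translate_mem_base_interior[OF subspace_0[OF subspace_Rfin] V(1)] by simp
  then show "\<exists>W. openin generated_topology W \<and> convex W \<and> 0 \<in> W \<and> W \<subseteq> U"
    using openin_base_interior convex_base_interior[OF assms[OF V(1)]] base_interior_subset V(2)
    by blast
qed

lemma nbhd_base_of_finest:
  assumes fin: "finest P T" and P: "P generated_topology"
    and small: "\<And>W. openin T W \<Longrightarrow> 0 \<in> W \<Longrightarrow> \<exists>V\<in>B. V \<subseteq> W"
  shows "nbhd_base T 0 B"
  unfolding nbhd_base_def
proof (intro conjI ballI allI impI)
  fix V assume "V \<in> B"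
  then obtain W where W: "openin generated_topology W" "0 \<in> W" "W \<subseteq> V"
    using nbhd_generated_topology unfolding nbhd_def by blast
  then have "openin T W"
    using fin P unfolding finest_def by blast
  then show "nbhd T 0 V"
    unfolding nbhd_def using W(2,3) by blast
next
  fix U assume "nbhd T 0 U"
  then obtain W where W: "openin T W" "0 \<in> W" "W \<subseteq> U"
    unfolding nbhd_def by blast
  then obtain V where "V \<in> B" "V \<subseteq> W"
    using small by blast
  then show "\<exists>V\<in>B. V \<subseteq> U"
    using W(3) by blast
qed

lemma zero_nbhd_base_convex_hulls: "zero_nbhd_base {convex hull V | V. V \<in> B}"
proof
  show "{convex hull V | V. V \<in> B} \<noteq> {}"
    using nonempty by blast
next
  fix W assume "W \<in> {convex hull V | V. V \<in> B}"
  then obtain V where V: "V \<in> B" and W: "W = convex hull V"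
    by blast
  show "W \<subseteq> Rfin"
    unfolding W using subset_Rfin[OF V] subspace_imp_convex[OF subspace_Rfin] by (rule hull_minimal)
  show "0 \<in> W"
    unfolding W using zero_mem[OF V] by (rule hull_inc)
  show "\<exists>a\<in>seqA. S a \<subseteq> W"
    unfolding W using contains_S[OF V] hull_subset[of V convex] by (meson order_trans)
  show "\<exists>W'\<in>{convex hull V | V. V \<in> B}. \<forall>x\<in>W'. \<forall>y\<in>W'. x + y \<in> W"
  proof -
    obtain V' where V': "V' \<in> B" "\<forall>c x. \<bar>c\<bar> \<le> 2 \<longrightarrow> x \<in> V' \<longrightarrow> c *\<^sub>R x \<in> V"
      using scale_refinement[OF V, of 2] by auto
    have "x + y \<in> W" if "x \<in> convex hull V'" "y \<in> convex hull V'" for x y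
    proof -
      have "(*\<^sub>R) 2 ` (convex hull V') \<subseteq> convex hull V"
        using V'(2) by (intro scaleR_image_convex_hull_subset) auto
      then have "(2::real) *\<^sub>R x \<in> convex hull V" "(2::real) *\<^sub>R y \<in> convex hull V"
        using that by blast+
      then have "(1/2::real) *\<^sub>R (2 *\<^sub>R x) + (1/2::real) *\<^sub>R (2 *\<^sub>R y) \<in> convex hull V"
        by (intro convexD[OF convex_convex_hull]) auto
      then show ?thesis
        unfolding W by simp
    qed
    then show ?thesis
      using V'(1) by (intro bexI[of _ "convex hull V'"]) blast+
  qed
  show "\<exists>W'\<in>{convex hull V | V. V \<in> B}. \<forall>c x. \<bar>c\<bar> \<le> C \<longrightarrow> x \<in> W' \<longrightarrow> c *\<^sub>R x \<in> W"
    if C: "C > 0" for C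
  proof -
    obtain V' where V': "V' \<in> B" "\<forall>c x. \<bar>c\<bar> \<le> C \<longrightarrow> x \<in> V' \<longrightarrow> c *\<^sub>R x \<in> V"
      using scale_refinement[OF V C] by auto
    have "c *\<^sub>R x \<in> W" if "\<bar>c\<bar> \<le> C" "x \<in> convex hull V'" for c x
    proof -
      have "(*\<^sub>R) c ` (convex hull V') \<subseteq> convex hull V"
        using V'(2) that(1) by (intro scaleR_image_convex_hull_subset) auto
      then show ?thesis
        unfolding W using that(2) by blast
    qed
    then show ?thesis
      using V'(1) by (intro bexI[of _ "convex hull V'"]) blast+
  qed
next
  fix W1 W2 assume "W1 \<in> {convex hull V | V. V \<in> B}" "W2 \<in> {convex hull V | V. V \<in> B}"
  then obtain V1 V2 where "V1 \<in> B" "W1 = convex hull V1" "V2 \<in> B" "W2 = convex hull V2"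
    by blast
  moreover obtain V where "V \<in> B" "V \<subseteq> V1 \<inter> V2"
    using Int_refinement calculation(1,3) by blast
  ultimately have "convex hull V \<subseteq> W1 \<inter> W2"
    using hull_mono[of V V1 convex] hull_mono[of V V2 convex] by blast
  then show "\<exists>W\<in>{convex hull V | V. V \<in> B}. W \<subseteq> W1 \<inter> W2"
    using \<open>V \<in> B\<close> by (intro bexI[of _ "convex hull V"]) blast+
qed

end

section \<open>The finest vector topologies in which \<open>e n \<rightarrow> 0\<close>\<close>

lemma real_in_seqA: "(\<lambda>n. real n) \<in> seqA"
  unfolding seqA_def using filterlim_real_sequentially by auto

lemma zero_nbhd_base_N_s: "zero_nbhd_base N_s"
proof
  have "Useq (\<lambda>k n. real n) \<in> N_s"
    unfolding N_s_def using real_in_seqA by blast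
  then show "N_s \<noteq> {}"
    by blast
next
  fix V assume "V \<in> N_s"
  then obtain as where as: "\<And>k. as k \<in> seqA" and V: "V = Useq as"
    unfolding N_s_def by blast
  show "V \<subseteq> Rfin"
    unfolding V by (rule Useq_subset_Rfin)
  show "0 \<in> V"
    unfolding V using zero_in_S[OF as] S_subset_Useq by blast
  show "\<exists>a\<in>seqA. S a \<subseteq> V"
    unfolding V using as S_subset_Useq by blast
  show "\<exists>V'\<in>N_s. \<forall>x\<in>V'. \<forall>y\<in>V'. x + y \<in> V"
  proof -
    obtain bs where "\<forall>k. bs k \<in> seqA" "\<forall>u\<in>Useq bs. \<forall>w\<in>Useq bs. u + w \<in> Useq as"
      using Useq_half_refinement[of as, OF as] by blast
    then show ?thesis
      unfolding V N_s_def by (intro bexI[of _ "Useq bs"]) blast+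
  qed
  show "\<exists>V'\<in>N_s. \<forall>c x. \<bar>c\<bar> \<le> C \<longrightarrow> x \<in> V' \<longrightarrow> c *\<^sub>R x \<in> V" if C: "C > 0" for C
  proof -
    obtain bs where "\<forall>k. bs k \<in> seqA"
      "\<forall>c u. \<bar>c\<bar> \<le> C \<longrightarrow> u \<in> Useq bs \<longrightarrow> c *\<^sub>R u \<in> Useq as"
      using Useq_scale_refinement[of as, OF as C] by blast
    then show ?thesis
      unfolding V N_s_def by (intro bexI[of _ "Useq bs"]) blast+
  qed
next
  fix V1 V2 assume "V1 \<in> N_s" "V2 \<in> N_s"
  then obtain as bs where "\<And>k. as k \<in> seqA" "V1 = Useq as" "\<And>k. bs k \<in> seqA" "V2 = Useq bs"
    unfolding N_s_def by blast
  moreover obtain cs where "\<forall>k. cs k \<in> seqA" "Useq cs \<subseteq> Useq as \<inter> Useq bs"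
    using Useq_Int_refinement[of as bs] calculation(1,3) by blast
  ultimately show "\<exists>V\<in>N_s. V \<subseteq> V1 \<inter> V2"
    unfolding N_s_def by (intro bexI[of _ "Useq cs"]) blast+
qed

lemma locally_convex_contains_convex_hull_Useq:
  assumes T: "locally_convex_vector_topology T" and en: "e_null T" and W: "openin T W" "0 \<in> W"
  shows "\<exists>V\<in>N_s. convex hull V \<subseteq> W"
proof -
  obtain W' where W': "openin T W'" "convex W'" "0 \<in> W'" "W' \<subseteq> W"
    using T W unfolding locally_convex_vector_topology_def by blast
  moreover obtain V where "V \<in> N_s" "V \<subseteq> W'"
    using vector_topology_contains_Useq[OF _ en W'(1,3)] T
    unfolding locally_convex_vector_topology_def by blast
  ultimately show ?thesis
    by (meson hull_minimal order_trans)
qed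

lemma spread_sum_mem_nbhd:
  fixes t :: nat and a :: real
  assumes base: "nbhd_base T 0 {convex hull V | V. V \<in> N_s}" and U: "nbhd T 0 U"
    and t: "t \<ge> 1" and a: "a > 0"
  shows "\<exists>q\<ge>1. \<forall>(m :: nat \<Rightarrow> nat) (lam :: nat \<Rightarrow> real).
           (q < m 1 \<and> (\<forall>i j. 1 \<le> i \<and> i < j \<and> j \<le> t \<longrightarrow> m i < m j) \<and>
            (\<forall>i\<in>{1..t}. \<bar>lam i\<bar> \<le> 1))
           \<longrightarrow> (\<Sum>i=1..t. (lam i * a) *\<^sub>R e (m i)) \<in> U"
proof -
  have "\<exists>W\<in>{convex hull V | V. V \<in> N_s}. W \<subseteq> U"
    using base U unfolding nbhd_base_def by blast
  then obtain as where as: "\<And>k. as k \<in> seqA" and hull: "convex hull Useq as \<subseteq> U"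
    unfolding N_s_def by blast
  obtain N where N: "\<And>n. n \<ge> N \<Longrightarrow> real t * a < as 0 n"
    using as[of 0] unfolding seqA_def filterlim_at_top_dense eventually_sequentially by blast
  show ?thesis
  proof (intro exI[of _ "max N 1"] conjI allI impI)
    fix m :: "nat \<Rightarrow> nat" and lam :: "nat \<Rightarrow> real"
    assume "max N 1 < m 1 \<and> (\<forall>i j. 1 \<le> i \<and> i < j \<and> j \<le> t \<longrightarrow> m i < m j) \<and>
      (\<forall>i\<in>{1..t}. \<bar>lam i\<bar> \<le> 1)"
    then have m1: "max N 1 < m 1" and m: "\<forall>i j. 1 \<le> i \<and> i < j \<and> j \<le> t \<longrightarrow> m i < m j"
      and lam: "\<forall>i\<in>{1..t}. \<bar>lam i\<bar> \<le> 1"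
      by auto
    have "real (card {1..t}) *\<^sub>R (lam i * a) *\<^sub>R e (m i) \<in> convex hull (Useq as)"
      if i: "i \<in> {1..t}" for i
    proof -
      have "m 1 \<le> m i"
        using m i by (cases "i = 1") (auto intro: less_imp_le)
      then have mi: "m i \<ge> 1" "m i \<ge> N"
        using m1 by auto
      have "\<bar>real t * (lam i * a)\<bar> \<le> real t * a"
        using lam i a by (simp add: abs_mult mult_left_le_one_le)
      then have "(real t * (lam i * a)) *\<^sub>R e (m i) \<in> S (as 0)"
        unfolding S_def using mi N[OF mi(2)] by fastforce
      then show ?thesis
        using S_subset_Useq hull_subset[of "Useq as" convex] by auto
    qed
    then have "(\<Sum>i=1..t. (lam i * a) *\<^sub>R e (m i)) \<in> convex hull (Useq as)"
      using t by (intro sum_mem_convex) auto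
    then show "(\<Sum>i=1..t. (lam i * a) *\<^sub>R e (m i)) \<in> U"
      using hull by blast
  qed simp
qed

theorem proposition2p1:
  fixes \<mu> \<nu> :: "(nat \<Rightarrow> real) topology"
  assumes mu: "finest (\<lambda>T. vector_topology T \<and> e_null T) \<mu>"
      and nu: "finest (\<lambda>T. locally_convex_vector_topology T \<and> e_null T) \<nu>"
  shows "nbhd_base \<mu> 0 N_s \<and>
         nbhd_base \<nu> 0 {convex hull V | V. V \<in> N_s} \<and>
         (\<forall>U t a. nbhd \<nu> 0 U \<and> t \<ge> 1 \<and> a > 0 \<longrightarrow>
           (\<exists>q\<ge>1. \<forall>(m :: nat \<Rightarrow> nat) (lam :: nat \<Rightarrow> real).
              (q < m 1 \<and> (\<forall>i j. 1 \<le> i \<and> i < j \<and> j \<le> t \<longrightarrow> m i < m j) \<and>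
               (\<forall>i\<in>{1..t}. \<bar>lam i\<bar> \<le> 1))
              \<longrightarrow> (\<Sum>i=1..t. (lam i * a) *\<^sub>R e (m i)) \<in> U))"
proof -
  interpret N: zero_nbhd_base N_s
    by (rule zero_nbhd_base_N_s)
  interpret C: zero_nbhd_base "{convex hull V | V. V \<in> N_s}"
    by (rule N.zero_nbhd_base_convex_hulls)
  have mu_vt: "vector_topology \<mu>" "e_null \<mu>" and nu_lc: "locally_convex_vector_topology \<nu>" "e_null \<nu>"
    using mu nu by (simp_all add: finest_def)
  have base_mu: "nbhd_base \<mu> 0 N_s"
    using N.vector_topology_generated_topology N.e_null_generated_topology
      vector_topology_contains_Useq[OF mu_vt] by (intro N.nbhd_base_of_finest[OF mu]) auto
  have base_nu: "nbhd_base \<nu> 0 {convex hull V | V. V \<in> N_s}"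
  proof (rule C.nbhd_base_of_finest[OF nu])
    show "locally_convex_vector_topology C.generated_topology \<and> e_null C.generated_topology"
      using C.locally_convex_generated_topology C.e_null_generated_topology by auto
    show "\<exists>V\<in>{convex hull V | V. V \<in> N_s}. V \<subseteq> W" if "openin \<nu> W" "0 \<in> W" for W
      using locally_convex_contains_convex_hull_Useq[OF nu_lc that] by blast
  qed
  show ?thesis
    using base_mu base_nu spread_sum_mem_nbhd[OF base_nu] by blast
qed

end
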